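(* Let $\mathcal{F}$ be the linear operator on $A(D)$ given by \[ \mathcal{F}\Big(\sum_{n\ge0}a_nz^n\Big)=\sum_{n\ge0}a_nz^{2n}+\sum_{k\ge0}a_{3k+2}z^{2k+1}. \] Then $\mathcal{F}\in\mathcal{L}(A(D))$ (continuous for the topology of uniform convergence on compact subsets), $\mathcal{F}$ is injective on $A(D)$ and has closed range in $A(D)$. Furthermore, $\mathcal{F}$ maps $H^2(D)$ into itself, $\mathcal{F}\in\mathcal{L}(H^2(D))$ with $\|\mathcal{F}\|_{\mathcal{L}(H^2(D))}\le\sqrt2$, and $\mathcal{F}$ is expansive in $H^2(D)$: $\|f\|_{H^2(D)}\le\|\mathcal{F}f\|_{H^2(D)}$ for all $f\in H^2(D)$.
   Context: $D$ is the open unit disk, $A(D)$ the space of holomorphic functions on $D$ with the topology of uniform convergence on compact subsets, and $H^2(D)$ the Hardy space with $\|f\|_{H^2(D)}^2=\sup_{0\le r<1}\frac1{2\pi}\int_0^{2\pi}|f(re^{i\phi})|^2d\phi$ (so $\|\sum a_nz^n\|^2=\sum|a_n|^2$). Equivalently, $\mathcal{F}g(z)=g(z^2)+\frac{z^{-1/3}}{3}\big(g(z^{2/3})+e^{2\pi i/3}g(z^{2/3}e^{2\pi i/3})+e^{4\pi i/3}g(z^{2/3}e^{4\pi i/3})\big)$, and $\mathcal{F}(\sum a_nz^n)=\sum a_{T(n)}z^n$ where $T$ is the Collatz map $T(n)=\frac{3n+1}2$ ($n$ odd), $T(n)=\frac n2$ ($n$ even). *)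

theory Defs
  imports "HOL-Complex_Analysis.Complex_Analysis"
begin

abbreviation unit_disk :: "complex set" where
  "unit_disk \<equiv> ball 0 1"

definition taylor_coeff :: "(complex \<Rightarrow> complex) \<Rightarrow> nat \<Rightarrow> complex" where
  "taylor_coeff f n = (deriv ^^ n) f 0 / of_nat (fact n)"

definition collatz_op :: "(complex \<Rightarrow> complex) \<Rightarrow> (complex \<Rightarrow> complex)" where
  "collatz_op f = (\<lambda>z. (\<Sum>n. taylor_coeff f n * z ^ (2 * n))
                      + (\<Sum>k. taylor_coeff f (3 * k + 2) * z ^ (2 * k + 1)))"

text \<open>Locally uniform convergence on D (topology of A(D)).\<close>
definition loc_unif_conv :: "(nat \<Rightarrow> complex \<Rightarrow> complex) \<Rightarrow> (complex \<Rightarrow> complex) \<Rightarrow> bool" where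
  "loc_unif_conv fs f \<longleftrightarrow>
     (\<forall>K. compact K \<and> K \<subseteq> unit_disk \<longrightarrow> uniform_limit K fs f sequentially)"

definition circle_mean2 :: "(complex \<Rightarrow> complex) \<Rightarrow> real \<Rightarrow> real" where
  "circle_mean2 f r = (1 / (2 * pi)) * integral {0..2*pi} (\<lambda>\<phi>. (cmod (f (of_real r * cis \<phi>)))\<^sup>2)"

definition in_H2 :: "(complex \<Rightarrow> complex) \<Rightarrow> bool" where
  "in_H2 f \<longleftrightarrow> f holomorphic_on unit_disk \<and> bdd_above (circle_mean2 f ` {0..<1})"

definition H2_norm :: "(complex \<Rightarrow> complex) \<Rightarrow> real" where
  "H2_norm f = sqrt (SUP r\<in>{0..<1}. circle_mean2 f r)"

end

(*
  Write a_n for the Taylor coefficients of f. The operator is the power series with coefficients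
  a_(T n), T the Collatz map, and splits as F f z = f(z^2) + G f z with G f odd. Cauchy's estimate
  |a_n| <= B / rho^n, B the maximum of |f| on |w| = rho, gives |a_(3k+2) z^(2k+1)| <= B rho^k for
  |z| <= rho^2, so F f is bounded on |z| <= rho^2 by a fixed multiple of the maximum of |f| on
  |w| <= rho: this is continuity for locally uniform convergence. Since G f is odd,
  f(w) = (F f(sqrt w) + F f(- sqrt w)) / 2, which gives injectivity and, applied to a locally
  uniform limit g of images F f_n, an explicit preimage of g. On H^2 Parseval's identity turns the
  norms into ||f||^2 = sum |a_n|^2 and ||F f||^2 = sum |a_n|^2 + sum |a_(3k+2)|^2, and the second
  sum lies between 0 and ||f||^2.
*)
theory Submission
  imports Defs
begin

lemma sums_even_odd:
  fixes a :: "nat \<Rightarrow> 'a::real_normed_vector"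
  assumes "(\<lambda>n. a (2*n)) sums A" and "(\<lambda>n. a (2*n+1)) sums B"
  shows "a sums (A + B)"
proof -
  have "(\<lambda>n. if even n then a n else 0) sums A"
    using assms(1) by (subst sums_mono_reindex[of "\<lambda>n. 2*n", symmetric])
      (auto simp: strict_mono_def elim!: oddE)
  moreover have "(\<lambda>n. if odd n then a n else 0) sums B"
    using assms(2) by (subst sums_mono_reindex[of "\<lambda>n. 2*n+1", symmetric])
      (auto simp: strict_mono_def image_iff elim!: oddE)
  ultimately have "(\<lambda>n. (if even n then a n else 0) + (if odd n then a n else 0)) sums (A + B)"
    by (rule sums_add)
  moreover have "(\<lambda>n. (if even n then a n else 0) + (if odd n then a n else 0)) = a"
    by auto
  ultimately show ?thesis
    by simp
qed

lemma
  fixes d :: "nat \<Rightarrow> real"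
  assumes nonneg: "\<And>n. 0 \<le> d n" and "summable d" and "inj g"
  shows summable_reindex_inj_nonneg: "summable (\<lambda>k. d (g k))"
    and suminf_reindex_inj_le: "(\<Sum>k. d (g k)) \<le> suminf d"
proof -
  have partial_le: "(\<Sum>k<N. d (g k)) \<le> suminf d" for N
  proof -
    have "(\<Sum>k<N. d (g k)) = sum d (g ` {..<N})"
      using sum.reindex[of g "{..<N}" d] \<open>inj g\<close> by (simp add: inj_on_subset)
    also have "\<dots> \<le> suminf d"
      using \<open>summable d\<close> nonneg by (intro sum_le_suminf) auto
    finally show ?thesis .
  qed
  show "summable (\<lambda>k. d (g k))"
    using nonneg partial_le by (intro summableI_nonneg_bounded)
  then show "(\<Sum>k. d (g k)) \<le> suminf d"
    using partial_le by (rule suminf_le_const)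
qed

section \<open>Parseval's identity on circles\<close>

lemma has_integral_cis_of_int:
  fixes k :: int
  shows "((\<lambda>t. cis (of_int k * t)) has_integral (if k = 0 then of_real (2*pi) else 0)) {0..2*pi}"
proof (cases "k = 0")
  case True
  then show ?thesis
    using has_integral_const_real[of "1::complex" 0 "2*pi"] by (simp add: scaleR_conv_of_real)
next
  case False
  define F where "F t = cis (of_int k * t) / (\<i> * of_int k)" for t
  have "(F has_vector_derivative cis (of_int k * t)) (at t within {0..2*pi})" for t
  proof -
    have "((\<lambda>t. cis (of_int k * t)) has_vector_derivative of_int k *\<^sub>R (\<i> * cis (of_int k * t)))
            (at t within {0..2*pi})"
      unfolding has_vector_derivative_def
      by (rule has_derivative_eq_rhs, (intro has_derivative_cis derivative_eq_intros)?, auto)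
    then have "(F has_vector_derivative of_int k *\<^sub>R (\<i> * cis (of_int k * t)) / (\<i> * of_int k))
                 (at t within {0..2*pi})"
      unfolding F_def by (rule has_vector_derivative_divide)
    then show ?thesis
      using False by (simp add: scaleR_conv_of_real)
  qed
  moreover have "F (2*pi) - F 0 = 0"
    using cis_multiple_2pi[of "of_int k"] by (simp add: F_def mult_ac)
  ultimately show ?thesis
    using fundamental_theorem_of_calculus[of 0 "2*pi" F] False by simp
qed

lemma has_integral_suminf_Weierstrass:
  fixes f :: "nat \<Rightarrow> real \<Rightarrow> 'a::banach"
  assumes bound: "\<And>m t. t \<in> {a..b} \<Longrightarrow> norm (f m t) \<le> M m" and "summable M"
    and cont: "\<And>m. continuous_on {a..b} (f m)"
    and int: "\<And>m. (f m has_integral I m) {a..b}"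
  shows "summable I" and "((\<lambda>t. \<Sum>m. f m t) has_integral (\<Sum>m. I m)) {a..b}"
proof -
  have "uniform_limit {a..b} (\<lambda>N t. \<Sum>m<N. f m t) (\<lambda>t. \<Sum>m. f m t) sequentially"
    using bound \<open>summable M\<close> by (intro Weierstrass_m_test) auto
  moreover have "continuous_on {a..b} (\<lambda>t. \<Sum>m<N. f m t)" for N
    by (intro continuous_intros cont)
  ultimately obtain J K where J: "\<And>N. ((\<lambda>t. \<Sum>m<N. f m t) has_integral J N) {a..b}"
    and K: "((\<lambda>t. \<Sum>m. f m t) has_integral K) {a..b}" and "J \<longlonglongrightarrow> K"
    by (rule uniform_limit_integral) auto
  moreover have "J = (\<lambda>N. \<Sum>m<N. I m)"
  proof
    show "J N = (\<Sum>m<N. I m)" for N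
      using has_integral_unique[OF J has_integral_sum[of "{..<N}" f I]] int by auto
  qed
  ultimately have "I sums K"
    unfolding sums_def by simp
  then show "summable I" and "((\<lambda>t. \<Sum>m. f m t) has_integral (\<Sum>m. I m)) {a..b}"
    using K by (auto simp: sums_iff)
qed

lemma
  fixes c :: "nat \<Rightarrow> complex"
  assumes "0 \<le> r" and "summable (\<lambda>n. norm (c n) * r^n)"
  shows has_integral_Fourier_coeff_powser:
      "((\<lambda>t. cnj (cis (real n * t)) * (\<Sum>m. c m * (r * cis t)^m)) has_integral 2*pi * c n * r^n) {0..2*pi}"
proof -
  define f where "f m (t::real) = cnj (cis (real n * t)) * (c m * (r * cis t)^m)" for m t
  have f_eq: "f m t = (c m * r^m) * cis (of_int (int m - int n) * t)" for m t
    by (simp add: f_def power_mult_distrib Complex.DeMoivre cis_cnj mult.assoc mult.left_commute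
        cis_mult[symmetric]) (simp add: cis_mult algebra_simps)
  have "((\<lambda>t. \<Sum>m. f m t) has_integral (\<Sum>m. if m = n then 2*pi * c n * r^n else 0)) {0..2*pi}"
  proof (rule has_integral_suminf_Weierstrass(2))
    show "norm (f m t) \<le> norm (c m) * r^m" for m t
      using \<open>0 \<le> r\<close> by (simp add: f_eq norm_mult norm_power)
    show "continuous_on {0..2*pi} (f m)" for m
      unfolding f_eq by (intro continuous_intros)
    show "(f m has_integral (if m = n then 2*pi * c n * r^n else 0)) {0..2*pi}" for m
      unfolding f_eq using has_integral_mult_right[OF has_integral_cis_of_int, of "c m * r^m" "int m - int n"]
      by (auto simp: mult_ac)
  qed fact
  moreover have "(\<Sum>m. f m t) = cnj (cis (real n * t)) * (\<Sum>m. c m * (r * cis t)^m)" for t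
    unfolding f_def
  proof (rule suminf_mult)
    show "summable (\<lambda>m. c m * (r * cis t)^m)"
      by (rule summable_norm_cancel) (use assms in \<open>simp add: norm_mult norm_power\<close>)
  qed
  moreover have "(\<Sum>m. if m = n then 2*pi * c n * r^n else 0) = 2*pi * c n * r^n"
    by (rule sums_unique[symmetric]) (rule sums_single)
  ultimately show ?thesis
    by simp
qed

lemma continuous_on_powser_circle:
  fixes c :: "nat \<Rightarrow> complex"
  assumes "0 \<le> r" and "summable (\<lambda>n. norm (c n) * r^n)"
  shows "continuous_on {a..b} (\<lambda>t. \<Sum>n. c n * (r * cis t)^n)"
proof -
  have "uniform_limit {a..b} (\<lambda>N t. \<Sum>n<N. c n * (r * cis t)^n) (\<lambda>t. \<Sum>n. c n * (r * cis t)^n) sequentially"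
    using assms by (intro Weierstrass_m_test[where M = "\<lambda>n. norm (c n) * r^n"]) (auto simp: norm_mult norm_power)
  moreover have "continuous_on {a..b} (\<lambda>t. \<Sum>n<N. c n * (r * cis t)^n)" for N
    by (intro continuous_intros)
  ultimately show ?thesis
    by (intro uniform_limit_theorem[OF always_eventually]) auto
qed

lemma has_integral_powser_term_mult_cnj:
  fixes c :: "nat \<Rightarrow> complex"
  assumes "0 \<le> r" and "summable (\<lambda>n. norm (c n) * r^n)"
  shows "((\<lambda>t. c n * (r * cis t)^n * cnj (\<Sum>m. c m * (r * cis t)^m))
           has_integral of_real (2*pi * ((norm (c n))\<^sup>2 * r^(2*n)))) {0..2*pi}"
proof -
  have "((\<lambda>t. cnj (cnj (cis (real n * t)) * (\<Sum>m. c m * (r * cis t)^m))) has_integral cnj (2*pi * c n * r^n))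
          {0..2*pi}"
    using has_integral_Fourier_coeff_powser[OF assms, THEN has_integral_cnj[THEN iffD2]]
    by (simp add: o_def)
  from has_integral_mult_right[OF this, of "c n * r^n"] show ?thesis
    unfolding of_real_mult complex_norm_square mult_2 power_add
    by (simp add: power_mult_distrib Complex.DeMoivre mult_ac)
qed

lemma
  fixes c :: "nat \<Rightarrow> complex"
  assumes "0 \<le> r" and abs_summable: "summable (\<lambda>n. norm (c n) * r^n)"
  shows summable_norm_powser_circle: "summable (\<lambda>n. (norm (c n))\<^sup>2 * r^(2*n))"
    and has_integral_norm_powser_circle:
      "((\<lambda>t. (cmod (\<Sum>n. c n * (r * cis t)^n))\<^sup>2) has_integral 2*pi * (\<Sum>n. (norm (c n))\<^sup>2 * r^(2*n)))
         {0..2*pi}"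
proof -
  define u where "u n t = c n * (r * cis t)^n" for n t
  define H where "H t = (\<Sum>n. u n t)" for t
  have norm_u: "norm (u n t) = norm (c n) * r^n" for n t
    using \<open>0 \<le> r\<close> by (simp add: u_def norm_mult norm_power)
  have summable_u: "summable (\<lambda>n. u n t)" for t
    by (rule summable_norm_cancel) (use abs_summable in \<open>simp add: norm_u\<close>)
  have norm_H: "norm (H t) \<le> (\<Sum>n. norm (c n) * r^n)" for t
    using summable_norm[of "\<lambda>n. u n t"] abs_summable by (simp add: H_def norm_u)
  have bound: "norm (u n t * cnj (H t)) \<le> norm (c n) * r^n * (\<Sum>n. norm (c n) * r^n)" for n t
    unfolding norm_mult complex_mod_cnj norm_u using norm_H \<open>0 \<le> r\<close> by (simp add: mult_left_mono)
  have cont: "continuous_on {0..2*pi} (\<lambda>t. u n t * cnj (H t))" for n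
    unfolding u_def H_def using continuous_on_powser_circle[OF assms] by (intro continuous_intros)
  have int: "((\<lambda>t. u n t * cnj (H t)) has_integral of_real (2*pi * ((norm (c n))\<^sup>2 * r^(2*n)))) {0..2*pi}"
    for n
    unfolding u_def H_def by (rule has_integral_powser_term_mult_cnj[OF assms])
  note termwise = has_integral_suminf_Weierstrass[OF bound summable_mult2[OF abs_summable] cont int]
  have summable: "summable (\<lambda>n. 2*pi * ((norm (c n))\<^sup>2 * r^(2*n)))"
    using termwise(1) by (simp only: summable_complex_of_real)
  then show summable_sq: "summable (\<lambda>n. (norm (c n))\<^sup>2 * r^(2*n))"
    by simp
  have "(\<Sum>n. u n t * cnj (H t)) = of_real ((cmod (H t))\<^sup>2)" for t
    unfolding complex_norm_square H_def by (rule suminf_mult2[OF summable_u, symmetric])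
  with termwise(2) have "((\<lambda>t. complex_of_real ((cmod (H t))\<^sup>2)) has_integral
      of_real (\<Sum>n. 2*pi * ((norm (c n))\<^sup>2 * r^(2*n)))) {0..2*pi}"
    by (simp add: suminf_of_real[OF summable])
  from has_integral_Re[OF this]
  show "((\<lambda>t. (cmod (\<Sum>n. c n * (r * cis t)^n))\<^sup>2) has_integral 2*pi * (\<Sum>n. (norm (c n))\<^sup>2 * r^(2*n)))
          {0..2*pi}"
    using suminf_mult[OF summable_sq] by (simp add: H_def u_def)
qed

section \<open>Radial means and the Hardy space\<close>

lemma circle_mean2_powser:
  fixes c :: "nat \<Rightarrow> complex"
  assumes sums: "\<And>z. norm z < R \<Longrightarrow> (\<lambda>n. c n * z^n) sums h z" and "0 \<le> r" "r < R"
  shows "summable (\<lambda>n. (norm (c n))\<^sup>2 * r^(2*n))"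
    and "circle_mean2 h r = (\<Sum>n. (norm (c n))\<^sup>2 * r^(2*n))"
proof -
  obtain w where w: "r < w" "w < R"
    using \<open>r < R\<close> dense by blast
  have "summable (\<lambda>n. c n * of_real w ^ n)"
    using sums[of "of_real w"] w \<open>0 \<le> r\<close> by (auto intro: sums_summable)
  then have "summable (\<lambda>n. norm (c n * of_real r ^ n))"
    by (rule powser_insidea) (use w \<open>0 \<le> r\<close> in auto)
  then have abs_summable: "summable (\<lambda>n. norm (c n) * r^n)"
    using \<open>0 \<le> r\<close> by (simp add: norm_mult norm_power)
  then show "summable (\<lambda>n. (norm (c n))\<^sup>2 * r^(2*n))"
    by (rule summable_norm_powser_circle[OF \<open>0 \<le> r\<close>])
  have "h (r * cis t) = (\<Sum>n. c n * (r * cis t)^n)" for t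
    using sums[of "r * cis t"] assms(2,3) by (simp add: sums_iff norm_mult)
  then show "circle_mean2 h r = (\<Sum>n. (norm (c n))\<^sup>2 * r^(2*n))"
    using has_integral_norm_powser_circle[OF \<open>0 \<le> r\<close> abs_summable]
    by (simp add: circle_mean2_def integral_unique)
qed

lemma radial_sum_le_suminf:
  fixes d :: "nat \<Rightarrow> real"
  assumes "\<And>n. 0 \<le> d n" "summable d" "0 \<le> r" "r \<le> 1"
  shows "(\<Sum>n. d n * r^(2*n)) \<le> suminf d"
proof (rule suminf_le)
  show le: "d n * r^(2*n) \<le> d n" for n
    using assms by (intro mult_left_le) (auto simp: power_le_one)
  show "summable (\<lambda>n. d n * r^(2*n))"
    by (rule summable_comparison_test[OF _ \<open>summable d\<close>]) (use le assms in auto)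
qed fact

lemma summable_of_bounded_radial_sums:
  fixes d :: "nat \<Rightarrow> real"
  assumes nonneg: "\<And>n. 0 \<le> d n"
    and radial: "\<And>r. 0 \<le> r \<Longrightarrow> r < 1 \<Longrightarrow> summable (\<lambda>n. d n * r^(2*n)) \<and> (\<Sum>n. d n * r^(2*n)) \<le> M"
  shows "summable d" and "suminf d \<le> M"
proof -
  have partial_le: "(\<Sum>n<N. d n) \<le> M" for N
  proof -
    have "((\<lambda>r. \<Sum>n<N. d n * r^(2*n)) \<longlongrightarrow> (\<Sum>n<N. d n * 1^(2*n))) (at_left (1::real))"
      by (intro tendsto_intros)
    moreover have "eventually (\<lambda>r. r \<in> {0<..<1}) (at_left (1::real))"
      by (rule eventually_at_left_real) simp
    then have "eventually (\<lambda>r. (\<Sum>n<N. d n * r^(2*n)) \<le> M) (at_left (1::real))"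
    proof eventually_elim
      case (elim r)
      then have "(\<Sum>n<N. d n * r^(2*n)) \<le> (\<Sum>n. d n * r^(2*n))"
        using radial[of r] nonneg by (intro sum_le_suminf) auto
      with elim radial[of r] show ?case by auto
    qed
    ultimately show ?thesis
      by (simp add: tendsto_upperbound)
  qed
  show "summable d"
    using nonneg partial_le by (rule summableI_nonneg_bounded)
  then show "suminf d \<le> M"
    using partial_le by (rule suminf_le_const)
qed

lemma
  fixes d :: "nat \<Rightarrow> real"
  assumes nonneg: "\<And>n. 0 \<le> d n"
    and radial: "\<And>r. 0 \<le> r \<Longrightarrow> r < 1 \<Longrightarrow> summable (\<lambda>n. d n * r^(2*n)) \<and> m r = (\<Sum>n. d n * r^(2*n))"
  shows bdd_above_radial_sums_iff: "bdd_above (m ` {0..<1}) \<longleftrightarrow> summable d"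
    and SUP_radial_sums: "summable d \<Longrightarrow> (SUP r\<in>{0..<1}. m r) = suminf d"
proof -
  have bdd: "bdd_above (m ` {0..<1})" if "summable d"
    by (rule bdd_aboveI2[where M = "suminf d"]) (use radial radial_sum_le_suminf nonneg that in auto)
  moreover have "summable d" if "bdd_above (m ` {0..<1})"
  proof -
    from that obtain M where "\<forall>r\<in>{0..<1}. m r \<le> M"
      by (auto simp: bdd_above_def)
    then show ?thesis
      using summable_of_bounded_radial_sums(1)[OF nonneg] radial by fastforce
  qed
  ultimately show "bdd_above (m ` {0..<1}) \<longleftrightarrow> summable d"
    by auto
  assume "summable d"
  show "(SUP r\<in>{0..<1}. m r) = suminf d"
  proof (rule antisym)
    show "(SUP r\<in>{0..<1}. m r) \<le> suminf d"
      by (rule cSUP_least) (use radial radial_sum_le_suminf nonneg \<open>summable d\<close> in auto)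
    have "m r \<le> (SUP r\<in>{0..<1}. m r)" if "0 \<le> r" "r < 1" for r
      by (rule cSUP_upper[OF _ bdd[OF \<open>summable d\<close>]]) (use that in auto)
    then show "suminf d \<le> (SUP r\<in>{0..<1}. m r)"
      using summable_of_bounded_radial_sums(2)[OF nonneg] radial by fastforce
  qed
qed

lemma
  fixes c :: "nat \<Rightarrow> complex"
  assumes holo: "h holomorphic_on unit_disk"
    and sums: "\<And>z. z \<in> unit_disk \<Longrightarrow> (\<lambda>n. c n * z^n) sums h z"
  shows in_H2_powser_iff: "in_H2 h \<longleftrightarrow> summable (\<lambda>n. (norm (c n))\<^sup>2)"
    and H2_norm_powser: "summable (\<lambda>n. (norm (c n))\<^sup>2) \<Longrightarrow> H2_norm h = sqrt (\<Sum>n. (norm (c n))\<^sup>2)"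
proof -
  have "summable (\<lambda>n. (norm (c n))\<^sup>2 * r^(2*n)) \<and> circle_mean2 h r = (\<Sum>n. (norm (c n))\<^sup>2 * r^(2*n))"
    if "0 \<le> r" "r < 1" for r
    using circle_mean2_powser[of 1 c h r] sums that by simp
  note radial = bdd_above_radial_sums_iff[OF _ this] SUP_radial_sums[OF _ this]
  show "in_H2 h \<longleftrightarrow> summable (\<lambda>n. (norm (c n))\<^sup>2)"
    using holo radial(1) by (simp add: in_H2_def)
  show "summable (\<lambda>n. (norm (c n))\<^sup>2) \<Longrightarrow> H2_norm h = sqrt (\<Sum>n. (norm (c n))\<^sup>2)"
    using radial(2) by (simp add: H2_norm_def)
qed

section \<open>Holomorphic functions on the unit disk\<close>

lemma compact_subset_unit_disk_imp_cball:
  assumes "compact K" "K \<subseteq> unit_disk"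
  obtains s where "0 < s" "s < 1" "K \<subseteq> cball 0 s"
proof (cases "K = {}")
  case True
  then show ?thesis
    using that[of "1/2"] by auto
next
  case False
  then obtain m where m: "m \<in> K" "\<forall>x\<in>K. norm x \<le> norm m"
    using compact_attains_sup[OF compact_continuous_image[OF continuous_on_norm_id \<open>compact K\<close>]]
    by auto
  show ?thesis
  proof (rule that)
    show "0 < max (1/2) (norm m)" "max (1/2) (norm m) < 1"
      using m assms(2) by auto
    show "K \<subseteq> cball 0 (max (1/2) (norm m))"
      using m by fastforce
  qed
qed

lemma loc_unif_conv_iff_cball:
  "loc_unif_conv fs f \<longleftrightarrow> (\<forall>s. 0 < s \<longrightarrow> s < 1 \<longrightarrow> uniform_limit (cball 0 s) fs f sequentially)"
  unfolding loc_unif_conv_def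
  by (metis compact_subset_unit_disk_imp_cball compact_cball uniform_limit_on_subset
      mem_ball_0 mem_cball_0 le_less_trans subsetI)

lemma holomorphic_on_loc_unif_limit:
  assumes "\<And>n. fs n holomorphic_on unit_disk" and "loc_unif_conv fs f"
  shows "f holomorphic_on unit_disk"
proof -
  have "f holomorphic_on ball 0 s" if "0 < s" "s < 1" for s
  proof (rule holomorphic_uniform_limit)
    show "uniform_limit (cball 0 s) fs f sequentially"
      using assms(2) that by (simp add: loc_unif_conv_iff_cball)
    have "cball 0 s \<subseteq> unit_disk"
      using that by auto
    then show "\<forall>\<^sub>F n in sequentially. continuous_on (cball 0 s) (fs n) \<and> fs n holomorphic_on ball 0 s"
      using assms(1) ball_subset_cball
      by (intro always_eventually allI conjI continuous_on_subset[OF holomorphic_on_imp_continuous_on]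
          holomorphic_on_subset[OF assms(1)]) auto
  qed auto
  then have "f holomorphic_on (\<Union>s\<in>{0<..<1}. ball 0 s)"
    by (intro holomorphic_on_UN_open) auto
  moreover have "(\<Union>s\<in>{0<..<1}. ball 0 s) = unit_disk"
    by auto (metis dense greaterThanLessThan_iff le_less_trans norm_ge_zero)
  ultimately show ?thesis
    by simp
qed

lemma loc_unif_conv_unique:
  assumes "loc_unif_conv fs f" "loc_unif_conv fs g" "z \<in> unit_disk"
  shows "f z = g z"
proof -
  have "(\<lambda>n. fs n z) \<longlonglongrightarrow> h z" if "loc_unif_conv fs h" for h
  proof -
    have "compact {z} \<and> {z} \<subseteq> unit_disk"
      using assms(3) by simp
    then have "uniform_limit {z} fs h sequentially"
      using that unfolding loc_unif_conv_def by blast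
    then show ?thesis
      by (rule tendsto_uniform_limitI) simp
  qed
  then show ?thesis
    using assms(1,2) LIMSEQ_unique by blast
qed

lemma holomorphic_on_powser_ball:
  fixes c :: "nat \<Rightarrow> complex"
  assumes "\<And>z. norm z < R \<Longrightarrow> summable (\<lambda>n. c n * z^n)"
  shows "(\<lambda>z. \<Sum>n. c n * z^n) holomorphic_on ball 0 R"
proof -
  have "conv_radius c \<ge> R"
  proof (rule conv_radius_geI_ex)
    fix r assume "0 < r" "ereal r < ereal R"
    then show "\<exists>z. norm z = r \<and> summable (\<lambda>n. c n * z^n)"
      using assms[of "of_real r"] by (intro exI[of _ "of_real r"]) auto
  qed
  then have "((\<lambda>z. \<Sum>n. c n * z^n) has_field_derivative (\<Sum>n. diffs c n * z^n)) (at z)"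
    if "z \<in> ball 0 R" for z
    using that by (intro has_field_derivative_powser) (auto intro: less_le_trans[of _ "ereal R"])
  then show ?thesis
    unfolding holomorphic_on_open[OF open_ball] by blast
qed

lemma continuous_on_unit_disk_bounded_on_cball:
  assumes "continuous_on unit_disk f" and "r < 1"
  obtains B where "\<And>w. norm w \<le> r \<Longrightarrow> norm (f w) \<le> B"
proof -
  have "compact (f ` cball 0 r)"
    using assms by (intro compact_continuous_image continuous_on_subset[OF assms(1)]) auto
  then obtain B where "\<forall>y\<in>f ` cball 0 r. norm y \<le> B"
    by (auto dest!: compact_imp_bounded simp: bounded_iff)
  then show ?thesis
    using that[of B] by auto
qed

lemma taylor_coeff_sums:
  assumes "f holomorphic_on unit_disk" "z \<in> unit_disk"
  shows "(\<lambda>n. taylor_coeff f n * z^n) sums f z"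
  using holomorphic_power_series[OF assms] by (simp add: taylor_coeff_def)

lemma taylor_coeff_diff:
  assumes "f holomorphic_on unit_disk" "g holomorphic_on unit_disk"
  shows "taylor_coeff (\<lambda>z. f z - g z) n = taylor_coeff f n - taylor_coeff g n"
  unfolding taylor_coeff_def by (simp add: higher_deriv_diff[OF assms] diff_divide_distrib)

lemma norm_taylor_coeff_le:
  assumes "f holomorphic_on unit_disk" "0 < r" "r < 1"
    and "\<And>w. norm w = r \<Longrightarrow> norm (f w) \<le> B"
  shows "norm (taylor_coeff f n) \<le> B / r^n"
proof -
  have "cball 0 r \<subseteq> unit_disk"
    using \<open>r < 1\<close> by auto
  then have "norm ((deriv ^^ n) f 0) \<le> fact n * B / r^n"
    using assms ball_subset_cball
    by (intro Cauchy_inequality) (auto intro: continuous_on_subset holomorphic_on_imp_continuous_on)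
  then show ?thesis
    by (simp add: taylor_coeff_def norm_divide field_simps)
qed

section \<open>The Collatz operator\<close>

definition collatz_map :: "nat \<Rightarrow> nat" where
  "collatz_map n = (if even n then n div 2 else (3 * n + 1) div 2)"

lemma collatz_map_even [simp]: "collatz_map (2 * k) = k"
  and collatz_map_odd [simp]: "collatz_map (2 * k + 1) = 3 * k + 2"
  by (simp_all add: collatz_map_def)

definition collatz_odd_part :: "(complex \<Rightarrow> complex) \<Rightarrow> complex \<Rightarrow> complex" where
  "collatz_odd_part f z = (\<Sum>k. taylor_coeff f (3 * k + 2) * z ^ (2 * k + 1))"

lemma collatz_op_eq_odd_part:
  assumes "f holomorphic_on unit_disk" "z \<in> unit_disk"
  shows "collatz_op f z = f (z^2) + collatz_odd_part f z"
proof -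
  have "z^2 \<in> unit_disk"
    using assms(2) by (simp add: norm_power power_less_one_iff)
  from taylor_coeff_sums[OF assms(1) this] show ?thesis
    by (simp add: collatz_op_def collatz_odd_part_def power_mult sums_iff)
qed

lemma norm_collatz_odd_term_le:
  assumes "f holomorphic_on unit_disk" "0 < \<rho>" "\<rho> < 1"
    and bound: "\<And>w. norm w = \<rho> \<Longrightarrow> norm (f w) \<le> B" and "norm z \<le> \<rho>^2"
  shows "norm (taylor_coeff f (3*k+2) * z^(2*k+1)) \<le> B * \<rho>^k"
proof -
  have "norm (f (of_real \<rho>)) \<le> B"
    using bound \<open>0 < \<rho>\<close> by simp
  then have "0 \<le> B"
    by (rule order_trans[OF norm_ge_zero])
  have "norm (taylor_coeff f (3*k+2) * z^(2*k+1)) = norm (taylor_coeff f (3*k+2)) * norm z^(2*k+1)"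
    by (simp add: norm_mult norm_power)
  also have "\<dots> \<le> (B / \<rho>^(3*k+2)) * (\<rho>^2)^(2*k+1)"
    using assms \<open>0 \<le> B\<close> by (intro mult_mono norm_taylor_coeff_le power_mono) auto
  also have "\<dots> = B * \<rho>^k"
    using \<open>0 < \<rho>\<close> by (simp add: field_simps flip: power_mult power_add)
  finally show ?thesis .
qed

lemma
  assumes holo: "f holomorphic_on unit_disk" and \<rho>: "0 < \<rho>" "\<rho> < 1"
    and bound: "\<And>w. norm w = \<rho> \<Longrightarrow> norm (f w) \<le> B" and z: "norm z \<le> \<rho>^2"
  shows summable_norm_collatz_odd_terms: "summable (\<lambda>k. norm (taylor_coeff f (3*k+2) * z^(2*k+1)))"
    and norm_collatz_odd_part_le: "norm (collatz_odd_part f z) \<le> B / (1 - \<rho>)"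
proof -
  have geometric: "(\<lambda>k. B * \<rho>^k) sums (B / (1 - \<rho>))"
    using sums_mult[OF geometric_sums, of \<rho> B] \<rho> by simp
  note term_le = norm_collatz_odd_term_le[OF holo \<rho> bound z]
  show summable: "summable (\<lambda>k. norm (taylor_coeff f (3*k+2) * z^(2*k+1)))"
    by (rule summable_comparison_test[OF _ sums_summable[OF geometric]])
       (use term_le in auto)
  have "norm (collatz_odd_part f z) \<le> (\<Sum>k. norm (taylor_coeff f (3*k+2) * z^(2*k+1)))"
    unfolding collatz_odd_part_def by (rule summable_norm[OF summable])
  also have "\<dots> \<le> B / (1 - \<rho>)"
    using suminf_le[OF term_le summable sums_summable[OF geometric]] sums_unique[OF geometric] by simp
  finally show "norm (collatz_odd_part f z) \<le> B / (1 - \<rho>)" .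
qed

lemma summable_collatz_odd_terms:
  assumes "f holomorphic_on unit_disk" "z \<in> unit_disk"
  shows "summable (\<lambda>k. taylor_coeff f (3*k+2) * z^(2*k+1))"
proof -
  define \<rho> where "\<rho> = sqrt ((1 + norm z) / 2)"
  have "0 < 1 + norm z"
    by (simp add: add_pos_nonneg)
  then have \<rho>: "0 < \<rho>" "\<rho> < 1" "norm z \<le> \<rho>^2"
    using assms(2) by (auto simp: \<rho>_def)
  obtain B where "\<And>w. norm w \<le> \<rho> \<Longrightarrow> norm (f w) \<le> B"
    using continuous_on_unit_disk_bounded_on_cball[OF holomorphic_on_imp_continuous_on[OF assms(1)] \<rho>(2)]
    by blast
  then have "summable (\<lambda>k. norm (taylor_coeff f (3*k+2) * z^(2*k+1)))"
    by (rule summable_norm_collatz_odd_terms[OF assms(1) \<rho>(1,2) _ \<rho>(3)]) auto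
  then show ?thesis
    by (rule summable_norm_cancel)
qed

lemma collatz_odd_part_minus:
  assumes "f holomorphic_on unit_disk" "z \<in> unit_disk"
  shows "collatz_odd_part f (- z) = - collatz_odd_part f z"
  using suminf_minus[OF summable_collatz_odd_terms[OF assms]]
  by (simp add: collatz_odd_part_def)

lemma collatz_op_sums:
  assumes "f holomorphic_on unit_disk" "z \<in> unit_disk"
  shows "(\<lambda>n. taylor_coeff f (collatz_map n) * z^n) sums collatz_op f z"
proof -
  have "z^2 \<in> unit_disk"
    using assms(2) by (simp add: norm_power power_less_one_iff)
  from taylor_coeff_sums[OF assms(1) this]
  have "(\<lambda>n. taylor_coeff f (collatz_map (2*n)) * z^(2*n)) sums (\<Sum>n. taylor_coeff f n * z^(2*n))"
    by (simp add: power_mult sums_iff)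
  moreover have "(\<lambda>n. taylor_coeff f (collatz_map (2*n+1)) * z^(2*n+1)) sums collatz_odd_part f z"
    unfolding collatz_map_odd collatz_odd_part_def
    by (rule summable_sums[OF summable_collatz_odd_terms[OF assms]])
  ultimately show ?thesis
    unfolding collatz_op_def collatz_odd_part_def by (rule sums_even_odd)
qed

lemma holomorphic_on_collatz_op:
  assumes "f holomorphic_on unit_disk"
  shows "collatz_op f holomorphic_on unit_disk"
proof -
  have "(\<lambda>z. \<Sum>n. taylor_coeff f (collatz_map n) * z^n) holomorphic_on unit_disk"
    using collatz_op_sums[OF assms] by (intro holomorphic_on_powser_ball) (auto intro: sums_summable)
  then show ?thesis
    by (rule holomorphic_transform) (use collatz_op_sums[OF assms] in \<open>simp add: sums_iff\<close>)
qed

lemma collatz_op_diff: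
  assumes "f holomorphic_on unit_disk" "g holomorphic_on unit_disk" "z \<in> unit_disk"
  shows "collatz_op (\<lambda>w. f w - g w) z = collatz_op f z - collatz_op g z"
proof -
  have "(\<lambda>n. taylor_coeff (\<lambda>w. f w - g w) (collatz_map n) * z^n) sums (collatz_op f z - collatz_op g z)"
    using sums_diff[OF collatz_op_sums[OF assms(1,3)] collatz_op_sums[OF assms(2,3)]]
    by (simp add: taylor_coeff_diff[OF assms(1,2)] left_diff_distrib)
  moreover have "(\<lambda>w. f w - g w) holomorphic_on unit_disk"
    using assms(1,2) by (rule holomorphic_on_diff)
  ultimately show ?thesis
    using collatz_op_sums[OF _ assms(3)] sums_unique2 by blast
qed

lemma norm_collatz_op_le:
  assumes "f holomorphic_on unit_disk" "0 < \<rho>" "\<rho> < 1"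
    and bound: "\<And>w. norm w \<le> \<rho> \<Longrightarrow> norm (f w) \<le> B" and z: "norm z \<le> \<rho>^2"
  shows "norm (collatz_op f z) \<le> B * (1 + 1 / (1 - \<rho>))"
proof -
  have "\<rho>^2 < 1"
    using assms(2,3) by (simp add: power_less_one_iff)
  have "norm (z^2) \<le> \<rho>"
    using power_mono[OF z, of 2] power_decreasing[of 1 4 \<rho>] assms(2,3)
    by (simp add: norm_power flip: power_mult)
  then have "norm (f (z^2)) \<le> B"
    by (rule bound)
  moreover have "norm (collatz_odd_part f z) \<le> B / (1 - \<rho>)"
    using bound by (intro norm_collatz_odd_part_le[OF assms(1-3) _ z]) auto
  ultimately show ?thesis
    using collatz_op_eq_odd_part[OF assms(1)] z \<open>\<rho>^2 < 1\<close>
    by (simp add: norm_triangle_le distrib_left)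
qed

lemma uniform_limit_collatz_op:
  assumes holo: "\<And>n. fs n holomorphic_on unit_disk" "f holomorphic_on unit_disk"
    and \<rho>: "0 < \<rho>" "\<rho> < 1" and unif: "uniform_limit (cball 0 \<rho>) fs f sequentially"
  shows "uniform_limit (cball 0 (\<rho>^2)) (\<lambda>n. collatz_op (fs n)) (collatz_op f) sequentially"
proof (rule uniform_limitI)
  fix e :: real assume "0 < e"
  define C where "C = 1 + 1 / (1 - \<rho>)"
  have "C > 0" "\<rho>^2 < 1"
    using \<rho> by (simp_all add: C_def add_pos_nonneg power_less_one_iff)
  with \<open>0 < e\<close> unif have "\<forall>\<^sub>F n in sequentially. \<forall>w\<in>cball 0 \<rho>. dist (fs n w) (f w) < e / (2 * C)"
    by (simp add: uniform_limit_iff)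
  then show "\<forall>\<^sub>F n in sequentially. \<forall>z\<in>cball 0 (\<rho>^2). dist (collatz_op (fs n) z) (collatz_op f z) < e"
  proof eventually_elim
    case (elim n)
    show ?case
    proof
      fix z :: complex assume z: "z \<in> cball 0 (\<rho>^2)"
      then have "z \<in> unit_disk"
        using \<open>\<rho>^2 < 1\<close> by auto
      have "norm (collatz_op (\<lambda>w. fs n w - f w) z) \<le> e / (2 * C) * (1 + 1 / (1 - \<rho>))"
      proof (rule norm_collatz_op_le)
        show "(\<lambda>w. fs n w - f w) holomorphic_on unit_disk"
          using holo by (rule holomorphic_on_diff)
        show "norm (fs n w - f w) \<le> e / (2 * C)" if "norm w \<le> \<rho>" for w
          using elim that by (auto simp: dist_norm intro: less_imp_le)
      qed (use \<rho> z in auto)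
      also have "\<dots> < e"
        using \<open>0 < e\<close> \<open>C > 0\<close> by (simp flip: C_def)
      finally show "dist (collatz_op (fs n) z) (collatz_op f z) < e"
        by (simp add: dist_norm collatz_op_diff[OF holo \<open>z \<in> unit_disk\<close>])
    qed
  qed
qed

lemma loc_unif_conv_collatz_op:
  assumes holo: "\<And>n. fs n holomorphic_on unit_disk" "f holomorphic_on unit_disk"
    and conv: "loc_unif_conv fs f"
  shows "loc_unif_conv (\<lambda>n. collatz_op (fs n)) (collatz_op f)"
  unfolding loc_unif_conv_iff_cball
proof (intro allI impI)
  fix s :: real assume "0 < s" "s < 1"
  then have "uniform_limit (cball 0 (sqrt s)) fs f sequentially"
    using conv by (simp add: loc_unif_conv_iff_cball)
  from uniform_limit_collatz_op[OF holo _ _ this] \<open>0 < s\<close> \<open>s < 1\<close>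
  show "uniform_limit (cball 0 s) (\<lambda>n. collatz_op (fs n)) (collatz_op f) sequentially"
    by simp
qed

lemma collatz_op_even_part:
  assumes "f holomorphic_on unit_disk" "w \<in> unit_disk"
  shows "f w = (collatz_op f (csqrt w) + collatz_op f (- csqrt w)) / 2"
proof -
  have "csqrt w \<in> unit_disk" "- csqrt w \<in> unit_disk"
    using assms(2) by auto
  then show ?thesis
    using collatz_odd_part_minus[OF assms(1)]
    by (simp add: collatz_op_eq_odd_part[OF assms(1)])
qed

lemma collatz_op_injective:
  assumes "f holomorphic_on unit_disk" "g holomorphic_on unit_disk"
    and "\<forall>z\<in>unit_disk. collatz_op f z = collatz_op g z" "w \<in> unit_disk"
  shows "f w = g w"
proof -
  have "csqrt w \<in> unit_disk" "- csqrt w \<in> unit_disk"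
    using assms(4) by auto
  then show ?thesis
    using assms by (simp add: collatz_op_even_part[of f] collatz_op_even_part[of g])
qed

lemma loc_unif_conv_of_collatz_op:
  assumes holo: "\<And>n. fs n holomorphic_on unit_disk"
    and conv: "loc_unif_conv (\<lambda>n. collatz_op (fs n)) g"
  shows "loc_unif_conv fs (\<lambda>w. (g (csqrt w) + g (- csqrt w)) / 2)"
  unfolding loc_unif_conv_iff_cball
proof (intro allI impI)
  fix s :: real assume "0 < s" "s < 1"
  then have unif: "uniform_limit (cball 0 (sqrt s)) (\<lambda>n. collatz_op (fs n)) g sequentially"
    using conv by (simp add: loc_unif_conv_iff_cball)
  have "csqrt \<in> cball 0 s \<rightarrow> cball 0 (sqrt s)" "(\<lambda>w. - csqrt w) \<in> cball 0 s \<rightarrow> cball 0 (sqrt s)"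
    by auto
  from this[THEN uniform_limit_compose'[OF unif]] have "uniform_limit (cball 0 s)
      (\<lambda>n w. (collatz_op (fs n) (csqrt w) + collatz_op (fs n) (- csqrt w)) / 2)
      (\<lambda>w. (g (csqrt w) + g (- csqrt w)) / 2) sequentially"
    by (intro uniform_limit_intros)
  moreover have "fs n w = (collatz_op (fs n) (csqrt w) + collatz_op (fs n) (- csqrt w)) / 2"
    if "w \<in> cball 0 s" for n w
    using collatz_op_even_part[OF holo] that \<open>s < 1\<close> by auto
  ultimately show "uniform_limit (cball 0 s) fs (\<lambda>w. (g (csqrt w) + g (- csqrt w)) / 2) sequentially"
    by (subst uniform_limit_cong'[where f = fs]) auto
qed

lemma collatz_op_closed_range:
  assumes holo: "\<And>n. fs n holomorphic_on unit_disk"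
    and conv: "loc_unif_conv (\<lambda>n. collatz_op (fs n)) g"
  shows "\<exists>f. f holomorphic_on unit_disk \<and> (\<forall>z\<in>unit_disk. collatz_op f z = g z)"
proof -
  define f where "f w = (g (csqrt w) + g (- csqrt w)) / 2" for w
  have "loc_unif_conv fs f"
    unfolding f_def by (rule loc_unif_conv_of_collatz_op[OF holo conv])
  moreover from this have "f holomorphic_on unit_disk"
    by (rule holomorphic_on_loc_unif_limit[OF holo])
  ultimately have "loc_unif_conv (\<lambda>n. collatz_op (fs n)) (collatz_op f)"
    by (intro loc_unif_conv_collatz_op holo)
  with conv \<open>f holomorphic_on unit_disk\<close> show ?thesis
    using loc_unif_conv_unique by blast
qed

lemma sums_comp_collatz_map:
  fixes d :: "nat \<Rightarrow> real"
  assumes "\<And>n. 0 \<le> d n" and "summable d"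
  shows "(\<lambda>n. d (collatz_map n)) sums (suminf d + (\<Sum>k. d (3*k+2)))"
proof (rule sums_even_odd)
  show "(\<lambda>n. d (collatz_map (2*n))) sums suminf d"
    using summable_sums[OF \<open>summable d\<close>] by simp
  have "inj (\<lambda>k::nat. 3*k+2)"
    by (auto intro: injI)
  then show "(\<lambda>n. d (collatz_map (2*n+1))) sums (\<Sum>k. d (3*k+2))"
    unfolding collatz_map_odd by (rule summable_sums[OF summable_reindex_inj_nonneg[OF assms]])
qed

lemma H2_collatz_op:
  assumes "in_H2 f"
  shows "in_H2 (collatz_op f) \<and> H2_norm (collatz_op f) \<le> sqrt 2 * H2_norm f
           \<and> H2_norm f \<le> H2_norm (collatz_op f)"
proof -
  have holo: "f holomorphic_on unit_disk"
    using assms by (simp add: in_H2_def)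
  define a where "a n = (norm (taylor_coeff f n))\<^sup>2" for n
  define b where "b = (\<Sum>k. a (3*k+2))"
  have a_nonneg: "0 \<le> a n" for n
    by (simp add: a_def)
  note f_powser = holo taylor_coeff_sums[OF holo]
  have "summable a"
    using assms in_H2_powser_iff[OF f_powser] by (simp add: a_def[abs_def])
  then have norm_f: "H2_norm f = sqrt (suminf a)"
    using H2_norm_powser[OF f_powser] by (simp add: a_def[abs_def])
  have "inj (\<lambda>k::nat. 3*k+2)"
    by (auto intro: injI)
  then have "0 \<le> b" "b \<le> suminf a"
    using suminf_nonneg[OF summable_reindex_inj_nonneg] suminf_reindex_inj_le a_nonneg \<open>summable a\<close>
    by (auto simp: b_def)
  note collatz_powser = holomorphic_on_collatz_op[OF holo] collatz_op_sums[OF holo]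
  have "(\<lambda>n. (norm (taylor_coeff f (collatz_map n)))\<^sup>2) sums (suminf a + b)"
    using sums_comp_collatz_map[OF a_nonneg \<open>summable a\<close>] by (simp add: a_def b_def)
  then have "in_H2 (collatz_op f)" and "H2_norm (collatz_op f) = sqrt (suminf a + b)"
    using in_H2_powser_iff[OF collatz_powser] H2_norm_powser[OF collatz_powser] by (auto simp: sums_iff)
  moreover have "sqrt (suminf a + b) \<le> sqrt 2 * sqrt (suminf a)"
    using \<open>b \<le> suminf a\<close> by (simp flip: real_sqrt_mult)
  moreover have "sqrt (suminf a) \<le> sqrt (suminf a + b)"
    using \<open>0 \<le> b\<close> by simp
  ultimately show ?thesis
    using norm_f by simp
qed

theorem mainTheorem6:
  shows "(\<forall>f. f holomorphic_on unit_disk \<longrightarrow> collatz_op f holomorphic_on unit_disk)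
   \<and> (\<forall>fs f. (\<forall>n. fs n holomorphic_on unit_disk) \<and> f holomorphic_on unit_disk
              \<and> loc_unif_conv fs f \<longrightarrow> loc_unif_conv (\<lambda>n. collatz_op (fs n)) (collatz_op f))
   \<and> (\<forall>f g. f holomorphic_on unit_disk \<and> g holomorphic_on unit_disk
              \<and> (\<forall>z\<in>unit_disk. collatz_op f z = collatz_op g z) \<longrightarrow> (\<forall>z\<in>unit_disk. f z = g z))
   \<and> (\<forall>fs g. (\<forall>n. fs n holomorphic_on unit_disk) \<and> loc_unif_conv (\<lambda>n. collatz_op (fs n)) g
              \<longrightarrow> (\<exists>f. f holomorphic_on unit_disk \<and> (\<forall>z\<in>unit_disk. collatz_op f z = g z)))
   \<and> (\<forall>f. in_H2 f \<longrightarrow> in_H2 (collatz_op f)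
              \<and> H2_norm (collatz_op f) \<le> sqrt 2 * H2_norm f
              \<and> H2_norm f \<le> H2_norm (collatz_op f))"
  using holomorphic_on_collatz_op loc_unif_conv_collatz_op collatz_op_injective
    collatz_op_closed_range H2_collatz_op
  by blast

end
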